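(* Let $f:\mathbb{Z}^n\to\mathbb{R}\cup\{+\infty\}$ be M-convex, $\emptyset\neq R\subsetneq N$, and $y\in\operatorname{dom} f$. Let $i\in R$ satisfy $f'(y;i,j)>\phi^R(y)$ for every $j\in N\setminus R$, and let $h\in R$, $k\in N\setminus R$ satisfy $f'(y;h,k)=\phi^R(y)$. Then $f'(y+\chi_h-\chi_k;i,j)>\phi^R(y)$ for every $j\in N\setminus R$.
   Context: $N=\{1,\dots,n\}$; $\chi_i\in\{0,1\}^n$ is the $i$-th unit vector. For $f:\mathbb{Z}^n\to\mathbb{R}\cup\{+\infty\}$, $\operatorname{dom} f=\{x\in\mathbb{Z}^n: f(x)<+\infty\}$. $f$ is M-convex if $\operatorname{dom} f\neq\emptyset$ and for all $x,y\in\operatorname{dom} f$ and every $i$ with $x(i)>y(i)$ there is $j$ with $x(j)<y(j)$ such that $f(x)+f(y)\ge f(x-\chi_i+\chi_j)+f(y+\chi_i-\chi_j)$. $f'(x;i,j)=f(x+\chi_i-\chi_j)-f(x)$ (possibly $+\infty$), and $\phi^R(x)=\min_{i\in R,\,j\in N\setminus R}f'(x;i,j)$. *)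

theory Defs
  imports "HOL-Library.Extended_Real" "HOL-Library.Function_Algebras"
begin

text \<open>Integer vectors in Z^n are modelled as functions from a finite index type 'n
  (playing the role of N) to int. Values in R \<union> {+\<infinity>} are ereals (never -\<infinity>).\<close>

definition unitv :: "'n \<Rightarrow> ('n \<Rightarrow> int)" where
  "unitv i = (\<lambda>j. if j = i then 1 else 0)"

definition effdom :: "(('n \<Rightarrow> int) \<Rightarrow> ereal) \<Rightarrow> ('n \<Rightarrow> int) set" where
  "effdom f = {x. f x < \<infinity>}"

definition M_convex :: "(('n \<Rightarrow> int) \<Rightarrow> ereal) \<Rightarrow> bool" where
  "M_convex f \<longleftrightarrow> effdom f \<noteq> {} \<and>
     (\<forall>x\<in>effdom f. \<forall>y\<in>effdom f. \<forall>i. x i > y i \<longrightarrow>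
        (\<exists>j. x j < y j \<and>
           f x + f y \<ge> f (x - unitv i + unitv j) + f (y + unitv i - unitv j)))"

definition fder :: "(('n \<Rightarrow> int) \<Rightarrow> ereal) \<Rightarrow> ('n \<Rightarrow> int) \<Rightarrow> 'n \<Rightarrow> 'n \<Rightarrow> ereal" where
  "fder f x i j = f (x + unitv i - unitv j) - f x"

definition phiR :: "(('n::finite \<Rightarrow> int) \<Rightarrow> ereal) \<Rightarrow> 'n set \<Rightarrow> ('n \<Rightarrow> int) \<Rightarrow> ereal" where
  "phiR f R x = Min ((\<lambda>(i, j). fder f x i j) ` (R \<times> (UNIV - R)))"

end

theory Submission
  imports Defs
begin

text \<open>Write \<open>y' = y + \<chi>h - \<chi>k\<close> and \<open>z = y' + \<chi>i - \<chi>j\<close>; note \<open>f y' = f y + \<phi>\<close> with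
  \<open>\<phi> = \<phi>\<^sup>R(y)\<close>. If \<open>f z\<close> is finite, the exchange axiom applied to \<open>z\<close>, \<open>y\<close> and the coordinate
  \<open>i\<close> (where \<open>z\<close> exceeds \<open>y\<close>) yields \<open>l\<close> with \<open>{l, m} = {j, k}\<close> for some \<open>m\<close> and
  \<open>f z + f y \<ge> f (y + \<chi>h - \<chi>m) + f (y + \<chi>i - \<chi>l)\<close>. The first summand is at least
  \<open>f y + \<phi>\<close> by minimality of \<open>\<phi>\<close>, the second exceeds \<open>f y + \<phi>\<close> by the choice of \<open>i\<close>,
  hence \<open>f z - f y' > \<phi>\<close>.\<close>

lemma phiR_le_fder:
  fixes f :: "('n::finite \<Rightarrow> int) \<Rightarrow> ereal"
  assumes "a \<in> R" "b \<notin> R"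
  shows "phiR f R y \<le> fder f y a b"
  unfolding phiR_def
  by (rule Min_le) (use assms in force)+

lemma ereal_le_fder_iff:
  fixes f :: "('n \<Rightarrow> int) \<Rightarrow> ereal"
  assumes "f y = ereal c"
  shows "ereal p \<le> fder f y a b \<longleftrightarrow> ereal (c + p) \<le> f (y + unitv a - unitv b)"
  using assms unfolding fder_def by (cases "f (y + unitv a - unitv b)") auto

lemma ereal_less_fder_iff:
  fixes f :: "('n \<Rightarrow> int) \<Rightarrow> ereal"
  assumes "f y = ereal c"
  shows "ereal p < fder f y a b \<longleftrightarrow> ereal (c + p) < f (y + unitv a - unitv b)"
  using assms unfolding fder_def by (cases "f (y + unitv a - unitv b)") auto

lemma double_shift_coord_increase:
  fixes y :: "'n \<Rightarrow> int"
  assumes "h \<noteq> i" "i \<noteq> k" "i \<noteq> j"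
  shows "y i < (y + unitv h - unitv k + unitv i - unitv j) i"
  using assms by (simp add: unitv_def)

lemma double_shift_exchange:
  fixes y :: "'n \<Rightarrow> int"
  assumes "h \<in> R" "i \<in> R" "k \<notin> R" "j \<notin> R"
    and "(y + unitv h - unitv k + unitv i - unitv j) l < y l"
  obtains m where "l \<notin> R" "m \<notin> R"
    "y + unitv h - unitv k + unitv i - unitv j - unitv i + unitv l = y + unitv h - unitv m"
proof -
  have "l = k \<or> l = j"
    using assms(5) by (auto simp: unitv_def split: if_splits)
  then show thesis
  proof
    assume "l = k"
    then show thesis by (rule_tac that[of j]) (use assms(3,4) in \<open>auto simp: algebra_simps\<close>)
  next
    assume "l = j"
    then show thesis by (rule_tac that[of k]) (use assms(3,4) in \<open>auto simp: algebra_simps\<close>)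
  qed
qed

lemma ereal_exchange_bound:
  fixes a b z :: ereal
  assumes "ereal (c + p) \<le> a" "ereal (c + p) < b" "a + b \<le> z + ereal c"
  shows "ereal (c + p + p) < z"
  using assms by (cases a; cases b; cases z) auto

lemma M_convex_double_shift_bound:
  fixes f :: "('n \<Rightarrow> int) \<Rightarrow> ereal"
  assumes M: "M_convex f" and y_dom: "y \<in> effdom f" and c: "f y = ereal c"
    and "h \<in> R" "i \<in> R" "k \<notin> R" "j \<notin> R" "h \<noteq> i"
    and h_min: "\<And>m. m \<notin> R \<Longrightarrow> ereal (c + p) \<le> f (y + unitv h - unitv m)"
    and i_above: "\<And>l. l \<notin> R \<Longrightarrow> ereal (c + p) < f (y + unitv i - unitv l)"
  shows "ereal (c + p + p) < f (y + unitv h - unitv k + unitv i - unitv j)"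
    (is "_ < f ?z")
proof (cases "f ?z = \<infinity>")
  case False
  then have "?z \<in> effdom f"
    by (simp add: effdom_def top.not_eq_extremum)
  moreover have "y i < ?z i"
    using assms(4-8) by (intro double_shift_coord_increase) auto
  ultimately obtain l where z_l: "?z l < y l"
    and exch: "f (?z - unitv i + unitv l) + f (y + unitv i - unitv l) \<le> f ?z + f y"
    using M y_dom unfolding M_convex_def by blast
  obtain m where l: "l \<notin> R" and m: "m \<notin> R"
    and z_shift: "?z - unitv i + unitv l = y + unitv h - unitv m"
    using double_shift_exchange[OF assms(4-7) z_l] .
  show ?thesis
    using exch[unfolded z_shift c] by (rule ereal_exchange_bound[OF h_min[OF m] i_above[OF l]])
qed simp

theorem mainTheorem10:
  fixes f :: "('n::finite \<Rightarrow> int) \<Rightarrow> ereal"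
    and R :: "'n set" and y :: "'n \<Rightarrow> int" and i h k :: 'n
  assumes fin_vals: "\<forall>x. f x \<noteq> -\<infinity>"
    and M: "M_convex f"
    and R_ne: "R \<noteq> {}" and R_proper: "R \<noteq> UNIV"
    and y_dom: "y \<in> effdom f"
    and i_R: "i \<in> R"
    and i_gt: "\<forall>j\<in>UNIV - R. fder f y i j > phiR f R y"
    and h_R: "h \<in> R" and k_nR: "k \<in> UNIV - R"
    and hk: "fder f y h k = phiR f R y"
  shows "\<forall>j\<in>UNIV - R. fder f (y + unitv h - unitv k) i j > phiR f R y"
proof
  fix j assume j_nR: "j \<in> UNIV - R"
  obtain c where c: "f y = ereal c"
    using y_dom fin_vals unfolding effdom_def by (cases "f y") auto
  have "phiR f R y < \<infinity>"
    using i_gt k_nR by force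
  moreover have "phiR f R y \<noteq> -\<infinity>"
    using hk fin_vals c unfolding fder_def by (cases "f (y + unitv h - unitv k)") auto
  ultimately obtain p where p: "phiR f R y = ereal p"
    by (cases "phiR f R y") auto
  have y'_val: "f (y + unitv h - unitv k) = ereal (c + p)"
    using hk c p unfolding fder_def by (cases "f (y + unitv h - unitv k)") auto
  have "h \<noteq> i"
    using hk i_gt k_nR by force
  moreover have "ereal (c + p) \<le> f (y + unitv h - unitv m)" if "m \<notin> R" for m
    using phiR_le_fder[OF h_R that, of f y] unfolding p ereal_le_fder_iff[of f y, OF c] .
  moreover have "ereal (c + p) < f (y + unitv i - unitv l)" if "l \<notin> R" for l
    using i_gt that unfolding p ereal_less_fder_iff[of f y, OF c] by blast
  ultimately have "ereal (c + p + p) < f (y + unitv h - unitv k + unitv i - unitv j)"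
    using M_convex_double_shift_bound[OF M y_dom c h_R i_R] k_nR j_nR by blast
  then show "phiR f R y < fder f (y + unitv h - unitv k) i j"
    using p y'_val by (simp add: ereal_less_fder_iff)
qed

end
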